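(* Let $\gamma$ be a first-order Ehresmann connection on $M\times_NC^{\mathrm{sym}}$ satisfying condition $(C_M)$, and let $\gamma^2=((\zeta^v_N)_* )^{-1}\circ\gamma\circ(\zeta_N)_*$ be the corresponding second-order Ehresmann connection on $M$. Then, in every induced coordinate system, $\gamma_{abr}\circ\zeta_N=-y_{ab,r}$ on $J^1M$ for all $a,b,r$.
   Context: $N$ is a connected oriented $n$-manifold; $p_M\colon M\to N$ the bundle of pseudo-Riemannian metrics of a fixed signature $(n^+,n^-)$; $C^{\mathrm{sym}}\to N$ the bundle of symmetric linear connections (fibre over $x$: values $\Gamma_x$ at $x$); $F(N)$ the linear frame bundle. Summation over repeated indices. A chart $(x^i)$ induces coordinates $(x^i,y_{ij})$ on $M$ ($y_{ij}=y_{ji}=g_x(\partial_i,\partial_j)$), $(x^i,y_{ij},y_{ij,k})$ on $J^1M$, and $(x^i,A^i_{jk})$ on $C^{\mathrm{sym}}$ ($A^i_{jk}=A^i_{kj}$, $A^i_{jk}(\Gamma_x)=\Gamma^i_{jk}(x)$, $\nabla_{\partial_j}\partial_k=\Gamma^i_{jk}\partial_i$). An Ehresmann connection on $M\times_NC^{\mathrm{sym}}\to N$ is a vertical-valued 1-form, identity on vertical vectors; locally $\gamma=\sum_{i\le j}(dy_{ij}+\gamma_{ijk}dx^k)\otimes\partial/\partial y_{ij}+\sum_{j\le k}(dA^i_{jk}+\gamma^i_{jkl}dx^l)\otimes\partial/\partial A^i_{jk}$, with $M$-component $\gamma_M=\sum_{i\le j}(dy_{ij}+\gamma_{ijk}dx^k)\otimes\partial/\partial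 y_{ij}$ viewed as $\mathrm{pr}_1^*TM\to\mathrm{pr}_1^*V(p_M)$. Condition $(C_M)$: $\gamma_M((g_x,\Gamma_x),X)=X-q_*(((p_M)_*X)^{h_{\Gamma_x}}_u)$ for all $X\in T_{g_x}M$, $u\in q^{-1}(g_x)$, where $q\colon F(N)\to M$ maps a frame with dual coframe $(w^h)$ to $\sum\varepsilon_hw^h\otimes w^h$ ($\varepsilon_h=1$ for $h\le n^+$, $-1$ otherwise) and $Y^{h_{\Gamma_x}}_u$ is the horizontal lift at $u$ for $\Gamma_x$ (equivalently, locally $\gamma_{klj}=-(y_{al}A^a_{jk}+y_{ak}A^a_{jl})$). $\zeta_N\colon J^1M\to M\times_NC^{\mathrm{sym}}$, $\zeta_N(j^1_xg)=(g_x,\Gamma^g_x)$ with $\Gamma^g$ the Levi-Civita connection; it is a diffeomorphism, $(\zeta_N)_*$ its differential and $(\zeta_N^v)_*$ the restriction to vertical bundles; a second-order Ehresmann connection on $M$ is a $V(p^1_M)$-valued 1-form on $J^1M$ that is the identity on $V(p^1_M)$. *)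

theory Defs
  imports "HOL-Analysis.Analysis"
begin

(* Local (induced-coordinate) model over a chart with index type 'n (n = CARD('n)).
   Metric fibre coordinate: y :: real^'n^'n, y$i$j = y_ij.
   Jet coordinate: dy i j k = y_{ij,k}.
   Connection fibre coordinate: A i j k = A^i_{jk}. *)

definition metric_of_signature :: "nat \<Rightarrow> real^'n^'n \<Rightarrow> bool" where
  "metric_of_signature p y \<longleftrightarrow>
     transpose y = y \<and>
     (\<exists>S P. card (S::'n set) = p \<and> invertible (P::real^'n^'n) \<and>
        y = transpose P ** (\<chi> i j. if i = j then (if i \<in> S then 1 else -1) else 0) ** P)"

definition sym_conn_coords :: "('n \<Rightarrow> 'n \<Rightarrow> 'n \<Rightarrow> real) \<Rightarrow> bool" where
  "sym_conn_coords A \<longleftrightarrow> (\<forall>i j k. A i j k = A i k j)"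

definition jet_coords :: "('n \<Rightarrow> 'n \<Rightarrow> 'n \<Rightarrow> real) \<Rightarrow> bool" where
  "jet_coords dy \<longleftrightarrow> (\<forall>i j k. dy i j k = dy j i k)"

definition levi_civita :: "real^'n^'n \<Rightarrow> ('n \<Rightarrow> 'n \<Rightarrow> 'n \<Rightarrow> real) \<Rightarrow> ('n \<Rightarrow> 'n \<Rightarrow> 'n \<Rightarrow> real)" where
  "levi_civita y dy = (\<lambda>i j k. (1/2) * (\<Sum>a\<in>UNIV. matrix_inv y $ i $ a * (dy a j k + dy a k j - dy j k a)))"

text \<open>zeta_N (j^1_x g) = (g_x, Gamma^g_x), in induced coordinates.\<close>
definition zeta_N :: "real^'n \<Rightarrow> real^'n^'n \<Rightarrow> ('n \<Rightarrow> 'n \<Rightarrow> 'n \<Rightarrow> real)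
    \<Rightarrow> (real^'n) \<times> (real^'n^'n) \<times> ('n \<Rightarrow> 'n \<Rightarrow> 'n \<Rightarrow> real)" where
  "zeta_N x y dy = (x, y, levi_civita y dy)"

text \<open>Local form of condition (C_M) on the M-component gamma_{klj} of the connection,
  over the chart domain U.\<close>
definition cond_CM :: "nat \<Rightarrow> (real^'n) set \<Rightarrow>
    (real^'n \<Rightarrow> real^'n^'n \<Rightarrow> ('n \<Rightarrow> 'n \<Rightarrow> 'n \<Rightarrow> real) \<Rightarrow> 'n \<Rightarrow> 'n \<Rightarrow> 'n \<Rightarrow> real) \<Rightarrow> bool" where
  "cond_CM p U gM \<longleftrightarrow>
     (\<forall>x\<in>U. \<forall>y A. metric_of_signature p y \<longrightarrow> sym_conn_coords A \<longrightarrow>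
        (\<forall>k l j. gM x y A k l j = - (\<Sum>a\<in>UNIV. y$a$l * A a j k + y$a$k * A a j l)))"

end

theory Submission
  imports Defs
begin

text \<open>Condition (C_M) expresses gamma_{abr} through the lowered Christoffel symbols
  y_{bc} A^c_{ra} + y_{ac} A^c_{rb}. Evaluated at the Levi-Civita connection of the 1-jet
  (y, y_{ij,k}) these are the Christoffel symbols of the first kind, whose sum is y_{ab,r}
  (metric compatibility), so gamma_{abr} \<circ> zeta_N = -y_{ab,r}.\<close>

lemma matrix_mul_matrix_inv_right:
  fixes A :: "'a::field^'n^'n"
  assumes "invertible A"
  shows "A ** matrix_inv A = mat 1"
  using assms unfolding invertible_def matrix_inv_def by (rule someI2_ex) auto

lemma sign_matrix_invertible:
  "invertible (\<chi> i j. if i = j then (if i \<in> S then 1 else -1) else 0 :: real^'n^'n)"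
  (is "invertible ?D")
proof -
  have "\<And>i j k. ?D$i$k * ?D$k$j = (if k = i then (if i = j then 1 else 0) else 0)"
    by auto
  then have "?D ** ?D = mat 1"
    unfolding matrix_matrix_mult_def mat_def by (simp add: vec_eq_iff)
  then show ?thesis
    unfolding invertible_def by blast
qed

lemma metric_of_signature_invertible:
  fixes y :: "real^'n^'n"
  assumes "metric_of_signature p y"
  shows "invertible y"
proof -
  obtain S P where "invertible (P::real^'n^'n)"
    and "y = transpose P ** (\<chi> i j. if i = j then (if i \<in> S then 1 else -1) else 0) ** P"
    using assms unfolding metric_of_signature_def by blast
  then show ?thesis
    by (simp add: invertible_mult sign_matrix_invertible transpose_invertible)
qed

lemma metric_of_signature_symmetric:
  assumes "metric_of_signature p y"
  shows "y$i$j = y$j$i"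
proof -
  have "transpose y = y"
    using assms by (simp add: metric_of_signature_def)
  then show ?thesis
    by (metis transpose_def vec_lambda_beta)
qed

lemma levi_civita_symmetric:
  assumes "jet_coords dy"
  shows "sym_conn_coords (levi_civita y dy)"
proof -
  have "dy a j k + dy a k j - dy j k a = dy a k j + dy a j k - dy k j a" for a j k
    using assms by (simp add: jet_coords_def)
  then show ?thesis
    unfolding sym_conn_coords_def levi_civita_def by presburger
qed

lemma levi_civita_lowered:
  assumes "invertible y"
  shows "(\<Sum>c\<in>UNIV. y$b$c * levi_civita y dy c r a) = (dy b r a + dy b a r - dy r a b) / 2"
proof -
  have delta: "(\<Sum>c\<in>UNIV. y$b$c * matrix_inv y $ c $ i) = (if b = i then 1 else 0)" for i
    using arg_cong[OF matrix_mul_matrix_inv_right[OF assms], of "\<lambda>M. M $ b $ i"]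
    by (simp add: matrix_matrix_mult_def mat_def)
  have "(\<Sum>c\<in>UNIV. y$b$c * levi_civita y dy c r a)
      = (1/2) * (\<Sum>c\<in>UNIV. \<Sum>i\<in>UNIV. y$b$c * (matrix_inv y $ c $ i * (dy i r a + dy i a r - dy r a i)))"
    unfolding levi_civita_def sum_distrib_left by (simp add: mult.left_commute)
  also have "\<dots> = (1/2) * (\<Sum>i\<in>UNIV. (\<Sum>c\<in>UNIV. y$b$c * matrix_inv y $ c $ i) * (dy i r a + dy i a r - dy r a i))"
    by (subst sum.swap) (simp add: sum_distrib_right mult.assoc)
  also have "\<dots> = (dy b r a + dy b a r - dy r a b) / 2"
    by (simp add: delta of_bool_def[symmetric])
  finally show ?thesis .
qed

lemma levi_civita_metric_compatible:
  assumes "invertible y" and "jet_coords dy"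
  shows "(\<Sum>c\<in>UNIV. y$b$c * levi_civita y dy c r a) + (\<Sum>c\<in>UNIV. y$a$c * levi_civita y dy c r b)
    = dy a b r"
proof -
  have "dy b a r = dy a b r" "dy r a b = dy a r b" "dy r b a = dy b r a"
    using assms(2) by (simp_all add: jet_coords_def)
  then show ?thesis
    unfolding levi_civita_lowered[OF assms(1)] by (simp add: field_simps)
qed

theorem lemma2:
  fixes p :: nat and U :: "(real^'n) set"
    and gM :: "real^'n \<Rightarrow> real^'n^'n \<Rightarrow> ('n \<Rightarrow> 'n \<Rightarrow> 'n \<Rightarrow> real) \<Rightarrow> 'n \<Rightarrow> 'n \<Rightarrow> 'n \<Rightarrow> real"
  assumes "open U"
    and "cond_CM p U gM"
    and "x \<in> U" and "metric_of_signature p y" and "jet_coords dy"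
  shows "(case zeta_N x y dy of (x', y', A) \<Rightarrow> gM x' y' A a b r) = - dy a b r"
proof -
  let ?\<Gamma> = "levi_civita y dy"
  have "gM x y ?\<Gamma> a b r = - (\<Sum>c\<in>UNIV. y$c$b * ?\<Gamma> c r a + y$c$a * ?\<Gamma> c r b)"
    using assms(2-4) levi_civita_symmetric[OF assms(5)] unfolding cond_CM_def by blast
  also have "\<dots> = - ((\<Sum>c\<in>UNIV. y$b$c * ?\<Gamma> c r a) + (\<Sum>c\<in>UNIV. y$a$c * ?\<Gamma> c r b))"
    by (simp add: sum.distrib metric_of_signature_symmetric[OF assms(4)])
  also have "\<dots> = - dy a b r"
    using levi_civita_metric_compatible[OF metric_of_signature_invertible[OF assms(4)] assms(5)]
    by simp
  finally show ?thesis
    by (simp add: zeta_N_def)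
qed

end
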